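(* Let $\omega\in\mathcal W$ with associated function $\tau$, and suppose $m\ge1$ is an integer such that $\tau(r)\ge c(1-r)^m$ for some $c>0$ and all $0\le r<1$. Let $\varphi,\psi$ be holomorphic self-maps of $\mathbb D$, $\zeta\in\partial\mathbb D$, and $M\ge1$ an integer such that $\varphi,\psi$ extend $M$ times continuously differentiably to $\overline{\mathbb D}\cap N$ for a neighborhood $N$ of $\zeta$, with $\varphi^{(n)}(\zeta)=\psi^{(n)}(\zeta)$ for $n=0,1,\dots,M$. Suppose moreover that $\varphi$ has order of contact at most $M/m$ at $\zeta$, i.e. there are $c'>0$ and a neighborhood $N'$ of $\zeta$ with $1-|\varphi(z)|\ge c'|\varphi(z)-\varphi(\zeta)|^{M/m}$ for all $z\in\mathbb D\cap N'$. Then $\lim_{z\to\zeta,\,z\in\mathbb D}\rho_\tau(\varphi(z),\psi(z))=0$.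
   Context: $\mathbb D$ is the unit disk. A weight is $\omega=e^{-\eta}$ with $\eta$ a radial $C^2$ function on $\mathbb D$, strictly increasing in $|z|$, $\Delta\eta>0$, $\omega$ integrable. $\omega\in\mathcal W$ if there is a differentiable radial $\tau>0$ with $\tau\asymp(\Delta\eta)^{-1/2}$ and $\tau(r)\to0$, $\tau'(r)\to0$ as $r\to1^-$; such $\tau$ is fixed. $d_\tau(z,w)=\inf_\gamma\int_0^1|\gamma'(t)|/\tau(\gamma(t))\,dt$ over piecewise smooth curves in $\mathbb D$ from $z$ to $w$; $\rho_\tau=1-e^{-d_\tau}$. *)

theory Defs
  imports "HOL-Complex_Analysis.Complex_Analysis"
begin

definition Dx :: "(complex \<Rightarrow> real) \<Rightarrow> complex \<Rightarrow> real" where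
  "Dx f z = deriv (\<lambda>t. f (z + of_real t)) 0"

definition Dy :: "(complex \<Rightarrow> real) \<Rightarrow> complex \<Rightarrow> real" where
  "Dy f z = deriv (\<lambda>t. f (z + \<i> * of_real t)) 0"

definition C1_on :: "complex set \<Rightarrow> (complex \<Rightarrow> real) \<Rightarrow> bool" where
  "C1_on S f \<longleftrightarrow> (\<forall>z\<in>S. f differentiable (at z)) \<and>
      continuous_on S (Dx f) \<and> continuous_on S (Dy f)"

definition C2_on :: "complex set \<Rightarrow> (complex \<Rightarrow> real) \<Rightarrow> bool" where
  "C2_on S f \<longleftrightarrow> C1_on S f \<and> C1_on S (Dx f) \<and> C1_on S (Dy f)"

definition laplacian :: "(complex \<Rightarrow> real) \<Rightarrow> complex \<Rightarrow> real" where
  "laplacian f z = Dx (Dx f) z + Dy (Dy f) z"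

text \<open>The weight \<omega> = exp(-\<eta>) is in the class W with associated radial function
  \<tau>(|z|) (\<tau> given by its radial profile on [0,1)).\<close>
definition in_W :: "(complex \<Rightarrow> real) \<Rightarrow> (real \<Rightarrow> real) \<Rightarrow> bool" where
  "in_W \<eta> \<tau> \<longleftrightarrow>
     C2_on (ball 0 1) \<eta> \<and>
     (\<forall>z\<in>ball 0 1. \<forall>w\<in>ball 0 1. cmod z = cmod w \<longrightarrow> \<eta> z = \<eta> w) \<and>
     (\<forall>z\<in>ball 0 1. \<forall>w\<in>ball 0 1. cmod z < cmod w \<longrightarrow> \<eta> z < \<eta> w) \<and>
     (\<forall>z\<in>ball 0 1. laplacian \<eta> z > 0) \<and>
     (\<lambda>z. exp (- \<eta> z)) integrable_on ball 0 1 \<and>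
     (\<forall>r\<in>{0..<1}. \<tau> r > 0) \<and>
     (\<forall>z\<in>ball 0 1. (\<lambda>z. \<tau> (cmod z)) differentiable (at z)) \<and>
     (\<exists>C1 C2. C1 > 0 \<and> C2 > 0 \<and>
        (\<forall>z\<in>ball 0 1. C1 * (laplacian \<eta> z) powr (-1/2) \<le> \<tau> (cmod z) \<and>
                        \<tau> (cmod z) \<le> C2 * (laplacian \<eta> z) powr (-1/2))) \<and>
     (\<tau> \<longlongrightarrow> 0) (at_left 1) \<and>
     ((deriv \<tau>) \<longlongrightarrow> 0) (at_left 1)"

definition d_tau :: "(real \<Rightarrow> real) \<Rightarrow> complex \<Rightarrow> complex \<Rightarrow> real" where
  "d_tau \<tau> z w = Inf {integral {0..1} (\<lambda>t. cmod (vector_derivative \<gamma> (at t)) / \<tau> (cmod (\<gamma> t))) | \<gamma>.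
       valid_path \<gamma> \<and> path_image \<gamma> \<subseteq> ball 0 1 \<and> pathstart \<gamma> = z \<and> pathfinish \<gamma> = w}"

definition rho_tau :: "(real \<Rightarrow> real) \<Rightarrow> complex \<Rightarrow> complex \<Rightarrow> real" where
  "rho_tau \<tau> z w = 1 - exp (- d_tau \<tau> z w)"

definition CM_ext :: "nat \<Rightarrow> complex set \<Rightarrow> (complex \<Rightarrow> complex) \<Rightarrow> (nat \<Rightarrow> complex \<Rightarrow> complex) \<Rightarrow> bool" where
  "CM_ext M N f F \<longleftrightarrow>
     (\<forall>z\<in>ball 0 1 \<inter> N. F 0 z = f z) \<and>
     (\<forall>n\<le>M. continuous_on (cball 0 1 \<inter> N) (F n)) \<and>
     (\<forall>n<M. \<forall>z\<in>cball 0 1 \<inter> N. (F n has_field_derivative F (Suc n) z) (at z within cball 0 1 \<inter> N))"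

end

theory Submission
  imports Defs
begin

text \<open>
  Write \<open>D = \<phi> - \<psi>\<close>. Since all derivatives of \<open>D\<close> up to order \<open>M\<close> vanish at \<open>\<zeta>\<close>,
  \<open>|D z| = o(|z - \<zeta>|^M)\<close>. On the other hand \<open>|z - \<zeta>|^M = O((1 - |\<phi> z|)^m)\<close>: trivially
  if \<open>|\<phi> \<zeta>| < 1\<close>; otherwise \<open>\<phi>'(\<zeta>) \<noteq> 0\<close> by the Schwarz--Pick bound
  \<open>1 - |\<phi> z| \<ge> C (1 - |z|)\<close>, so \<open>|\<phi> z - \<phi> \<zeta>| \<ge> k |z - \<zeta>|\<close> and the order of contact gives
  the claim. Hence \<open>|\<phi> z - \<psi> z| = o((1 - |\<phi> z|)^m)\<close>, and integrating \<open>1/\<tau>\<close> along the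
  segment from \<open>\<phi> z\<close> to \<open>\<psi> z\<close>, where \<open>\<tau> \<ge> c (1 - |\<phi> z|)^m / 2^m\<close>, shows
  \<open>d\<^sub>\<tau>(\<phi> z, \<psi> z) \<rightarrow> 0\<close>.
\<close>

lemma integral_atLeastAtMost_le_const:
  fixes f :: "real \<Rightarrow> real"
  assumes "\<And>t. t \<in> {a..b} \<Longrightarrow> f t \<le> B" "0 \<le> B" "a \<le> b"
  shows "integral {a..b} f \<le> B * (b - a)"
proof (cases "f integrable_on {a..b}")
  case True
  then have "integral {a..b} f \<le> integral {a..b} (\<lambda>_. B)"
    using assms by (intro integral_le) auto
  then show ?thesis using assms by (simp add: mult.commute)
qed (use assms in \<open>simp add: not_integrable_integral\<close>)

lemma integral_nonneg_of_nonneg: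
  fixes f :: "'n::euclidean_space \<Rightarrow> real"
  assumes "\<And>x. x \<in> S \<Longrightarrow> 0 \<le> f x"
  shows "0 \<le> integral S f"
  using assms by (cases "f integrable_on S") (auto intro: integral_nonneg simp: not_integrable_integral)

lemma d_tau_bounds_linepath:
  assumes "\<forall>r\<in>{0..<1}. \<tau> r > 0" and "a \<in> ball 0 1" "b \<in> ball 0 1"
  shows "0 \<le> d_tau \<tau> a b"
    and "d_tau \<tau> a b \<le> integral {0..1} (\<lambda>t. cmod (b - a) / \<tau> (cmod (linepath a b t)))"
proof -
  let ?L = "\<lambda>\<gamma>. integral {0..1} (\<lambda>t. cmod (vector_derivative \<gamma> (at t)) / \<tau> (cmod (\<gamma> t)))"
  let ?P = "{?L \<gamma> | \<gamma>. valid_path \<gamma> \<and> path_image \<gamma> \<subseteq> ball 0 1 \<and> pathstart \<gamma> = a \<and> pathfinish \<gamma> = b}"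
  have "path_image (linepath a b) \<subseteq> ball 0 1"
    using assms by (simp add: closed_segment_subset)
  then have segment: "?L (linepath a b) \<in> ?P"
    by (auto intro!: exI[of _ "linepath a b"])
  have nonneg: "0 \<le> x" if "x \<in> ?P" for x
  proof -
    obtain \<gamma> where "x = ?L \<gamma>" "path_image \<gamma> \<subseteq> ball 0 1"
      using \<open>x \<in> ?P\<close> by blast
    then show ?thesis
      using assms(1) by (auto simp: path_image_def intro!: integral_nonneg_of_nonneg divide_nonneg_pos)
  qed
  show "0 \<le> d_tau \<tau> a b"
    unfolding d_tau_def using segment nonneg by (intro cInf_greatest) auto
  have "d_tau \<tau> a b \<le> ?L (linepath a b)"
    unfolding d_tau_def using segment nonneg by (intro cInf_lower bdd_belowI)
  then show "d_tau \<tau> a b \<le> integral {0..1} (\<lambda>t. cmod (b - a) / \<tau> (cmod (linepath a b t)))"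
    by simp
qed

lemma d_tau_le_segment:
  assumes "\<forall>r\<in>{0..<1}. \<tau> r > 0" and "a \<in> ball 0 1" "b \<in> ball 0 1"
    and "L > 0" "\<And>x. x \<in> closed_segment a b \<Longrightarrow> L \<le> \<tau> (cmod x)"
  shows "d_tau \<tau> a b \<le> cmod (b - a) / L"
proof -
  have "cmod (b - a) / \<tau> (cmod (linepath a b t)) \<le> cmod (b - a) / L" if "t \<in> {0..1}" for t
  proof -
    have "L \<le> \<tau> (cmod (linepath a b t))"
      using assms(5) that by (simp add: linepath_in_path)
    then show ?thesis
      using assms(4) by (intro divide_left_mono) auto
  qed
  then have "integral {0..1} (\<lambda>t. cmod (b - a) / \<tau> (cmod (linepath a b t))) \<le> cmod (b - a) / L"
    using integral_atLeastAtMost_le_const[of 0 1 _ "cmod (b - a) / L"] assms(4) by simp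
  with d_tau_bounds_linepath(2)[OF assms(1-3)] show ?thesis by linarith
qed

lemma d_tau_le_near:
  fixes a b :: complex
  assumes "c > 0" and tau_lower: "\<forall>r\<in>{0..<1}. c * (1 - r) ^ m \<le> \<tau> r"
    and "cmod a < 1" and near: "cmod (a - b) \<le> (1 - cmod a) / 2"
  shows "0 \<le> d_tau \<tau> a b" and "d_tau \<tau> a b \<le> 2 ^ m * cmod (a - b) / (c * (1 - cmod a) ^ m)"
proof -
  have tau_pos: "\<forall>r\<in>{0..<1}. \<tau> r > 0"
    using assms(1) tau_lower by (smt (verit) atLeastLessThan_iff mult_pos_pos zero_less_power)
  have away: "(1 - cmod a) / 2 \<le> 1 - cmod x" if "x \<in> closed_segment a b" for x
  proof -
    have "cmod (x - a) \<le> cmod (b - a)"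
      using that by (metis dist_commute dist_in_closed_segment dist_norm)
    then show ?thesis
      using near norm_triangle_sub[of x a] by (simp add: norm_minus_commute)
  qed
  have b: "cmod b < 1"
    using away[of b] assms(3) by simp
  then show "0 \<le> d_tau \<tau> a b"
    using d_tau_bounds_linepath(1)[OF tau_pos] assms(3) by simp
  have "d_tau \<tau> a b \<le> cmod (b - a) / (c * ((1 - cmod a) / 2) ^ m)"
  proof (rule d_tau_le_segment[OF tau_pos])
    fix x assume x: "x \<in> closed_segment a b"
    have "c * ((1 - cmod a) / 2) ^ m \<le> c * (1 - cmod x) ^ m"
      using away[OF x] assms by (intro mult_left_mono power_mono) auto
    also have "\<dots> \<le> \<tau> (cmod x)"
      using tau_lower away[OF x] assms(3) by simp
    finally show "c * ((1 - cmod a) / 2) ^ m \<le> \<tau> (cmod x)" .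
  qed (use assms b in auto)
  then show "d_tau \<tau> a b \<le> 2 ^ m * cmod (a - b) / (c * (1 - cmod a) ^ m)"
    by (simp add: norm_minus_commute power_divide ac_simps)
qed

lemma tendsto_rho_tau_zeroI:
  fixes a b :: "'a \<Rightarrow> complex"
  assumes "c > 0" "m \<ge> 1" and tau_lower: "\<forall>r\<in>{0..<1}. c * (1 - r) ^ m \<le> \<tau> r"
    and inside: "\<forall>\<^sub>F x in F. cmod (a x) < 1"
    and close: "\<And>e. e > 0 \<Longrightarrow> \<forall>\<^sub>F x in F. cmod (a x - b x) \<le> e * (1 - cmod (a x)) ^ m"
  shows "((\<lambda>x. rho_tau \<tau> (a x) (b x)) \<longlongrightarrow> 0) F"
proof (rule tendstoI)
  fix \<epsilon> :: real assume "\<epsilon> > 0"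
  define e where "e = min (1/2) (\<epsilon> * c / 2 ^ (m + 1))"
  have e: "e > 0" using \<open>\<epsilon> > 0\<close> \<open>c > 0\<close> by (simp add: e_def)
  show "\<forall>\<^sub>F x in F. dist (rho_tau \<tau> (a x) (b x)) 0 < \<epsilon>"
    using inside close[OF e]
  proof eventually_elim
    case (elim x)
    define u where "u = 1 - cmod (a x)"
    have u: "0 < u" "u \<le> 1" using elim(1) by (auto simp: u_def)
    have "u ^ m \<le> u" using power_decreasing[of 1 m u] u \<open>m \<ge> 1\<close> by simp
    then have "e * u ^ m \<le> 1/2 * u" using e u by (intro mult_mono') (auto simp: e_def)
    then have "cmod (a x - b x) \<le> (1 - cmod (a x)) / 2" using elim(2) by (simp add: u_def)
    note d_tau_bounds = d_tau_le_near[OF \<open>c > 0\<close> tau_lower elim(1) this]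
    have "d_tau \<tau> (a x) (b x) \<le> 2 ^ m * cmod (a x - b x) / (c * u ^ m)"
      using d_tau_bounds(2) by (simp add: u_def)
    also have "\<dots> \<le> 2 ^ m * (e * u ^ m) / (c * u ^ m)"
      using elim(2) u \<open>c > 0\<close> by (intro divide_right_mono mult_left_mono) (auto simp: u_def)
    also have "\<dots> = 2 ^ m * e / c" using u by simp
    also have "\<dots> \<le> \<epsilon> / 2"
      using \<open>c > 0\<close> by (simp add: e_def field_simps min_def)
    finally have "d_tau \<tau> (a x) (b x) < \<epsilon>" using \<open>\<epsilon> > 0\<close> by simp
    then show ?case
      using d_tau_bounds(1) exp_ge_add_one_self[of "- d_tau \<tau> (a x) (b x)"]
      by (simp add: rho_tau_def dist_real_def)
  qed
qed

lemma Moebius_function_one_minus_norm_sq: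
  assumes "cmod w < 1" "cmod z < 1"
  shows "1 - cmod (Moebius_function 0 w z) ^ 2 =
         (1 - cmod w ^ 2) * (1 - cmod z ^ 2) / cmod (1 - cnj w * z) ^ 2"
proof -
  have "cmod (cnj w * z) < 1"
    using norm_mult_less[of "cnj w" 1 z 1] assms by simp
  then have "1 - w * cnj z \<noteq> 0"
    by (metis complex_cnj_cnj complex_cnj_mult complex_mod_cnj mult.commute norm_one right_minus_eq
        less_irrefl)
  then show ?thesis
    unfolding Moebius_function_def
    by (cases w; cases z)
      (simp add: divide_simps norm_divide norm_mult;
       simp add: complex_norm complex_diff complex_mult one_complex.code complex_cnj;
       auto simp: algebra_simps power2_eq_square)
qed

lemma Moebius_function_boundary_distance_ge:
  assumes "cmod w < 1" "cmod z < 1"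
  shows "(1 - cmod w) * (1 - cmod z) / 8 \<le> 1 - cmod (Moebius_function 0 w z)"
proof -
  let ?m = "cmod (Moebius_function 0 w z)"
  have den: "0 < cmod (1 - cnj w * z)" "cmod (1 - cnj w * z) \<le> 2"
  proof -
    have "cmod (cnj w * z) < 1"
      using norm_mult_less[of "cnj w" 1 z 1] assms by simp
    then show "0 < cmod (1 - cnj w * z)" "cmod (1 - cnj w * z) \<le> 2"
      using norm_triangle_ineq4[of 1 "cnj w * z"] by auto
  qed
  have square_le: "1 - t \<le> 1 - t ^ 2" if "0 \<le> t" "t < 1" for t :: real
    using that mult_left_le_one_le[of t t] by (simp add: power2_eq_square)
  have "(1 - cmod w) * (1 - cmod z) / 4 \<le> (1 - cmod w ^ 2) * (1 - cmod z ^ 2) / 4"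
    using assms square_le[of "cmod w"] square_le[of "cmod z"]
    by (intro divide_right_mono mult_mono) auto
  also have "\<dots> \<le> (1 - cmod w ^ 2) * (1 - cmod z ^ 2) / cmod (1 - cnj w * z) ^ 2"
  proof (rule divide_left_mono)
    show "cmod (1 - cnj w * z) ^ 2 \<le> 4"
      using power_mono[OF den(2), of 2] by simp
  qed (use assms den in \<open>auto simp: power_le_one intro!: mult_nonneg_nonneg\<close>)
  also have "\<dots> = (1 - ?m) * (1 + ?m)"
    using Moebius_function_one_minus_norm_sq[OF assms] by (simp add: power2_eq_square algebra_simps)
  also have "\<dots> \<le> (1 - ?m) * 2"
    using Moebius_function_norm_lt_1[OF assms, of 0] by (intro mult_left_mono) auto
  finally show ?thesis by simp
qed

lemma self_map_ball_boundary_distance_ge: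
  assumes hol: "f holomorphic_on ball 0 1" and img: "f ` ball 0 1 \<subseteq> ball 0 1"
  shows "\<exists>C>0. \<forall>z\<in>ball 0 1. C * (1 - cmod z) \<le> 1 - cmod (f z)"
proof -
  define a where "a = f 0"
  have f_in: "cmod (f z) < 1" if "cmod z < 1" for z
    using img that by (auto simp: image_subset_iff)
  have a: "cmod a < 1"
    using f_in by (simp add: a_def)
  define g where "g = Moebius_function 0 a \<circ> f"
  have "g holomorphic_on ball 0 1"
    unfolding g_def using a img
    by (intro holomorphic_on_compose_gen[OF hol Moebius_function_holomorphic]) auto
  moreover have "g 0 = 0"
    by (simp add: g_def a_def Moebius_function_eq_zero)
  moreover have g_in: "cmod (g z) < 1" if "cmod z < 1" for z
    unfolding g_def using Moebius_function_norm_lt_1 a f_in that by simp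
  ultimately have g_le: "cmod (g z) \<le> cmod z" if "cmod z < 1" for z
    using Schwarz_Lemma(1) that by blast
  show ?thesis
  proof (intro exI[of _ "(1 - cmod a) / 8"] conjI ballI)
    fix z :: complex assume "z \<in> ball 0 1"
    then have z: "cmod z < 1" by simp
    have "f z = Moebius_function 0 (-a) (g z)"
      using Moebius_function_compose[of "-a" a "f z"] a f_in[OF z] by (simp add: g_def)
    then have "(1 - cmod a) * (1 - cmod (g z)) / 8 \<le> 1 - cmod (f z)"
      using Moebius_function_boundary_distance_ge[of "-a" "g z"] a g_in[OF z] by simp
    moreover have "(1 - cmod a) * (1 - cmod z) \<le> (1 - cmod a) * (1 - cmod (g z))"
      using a g_le[OF z] by (intro mult_left_mono) auto
    ultimately show "(1 - cmod a) / 8 * (1 - cmod z) \<le> 1 - cmod (f z)"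
      by simp
  qed (use a in simp)
qed

lemma vanishing_derivatives_imp_eventually_norm_le_power:
  fixes D :: "nat \<Rightarrow> 'a::real_normed_field \<Rightarrow> 'a"
  assumes "convex S" "\<zeta> \<in> S"
    and der: "\<And>n z. n < M \<Longrightarrow> z \<in> S \<Longrightarrow> (D n has_field_derivative D (Suc n) z) (at z within S)"
    and cont: "continuous (at \<zeta> within S) (D M)"
    and zero: "\<And>n. n \<le> M \<Longrightarrow> D n \<zeta> = 0"
    and "e > 0"
  shows "\<forall>\<^sub>F w in at \<zeta> within S. norm (D 0 w) \<le> e * norm (w - \<zeta>) ^ M"
proof -
  obtain \<delta> where "\<delta> > 0" and \<delta>: "\<And>w. w \<in> S \<Longrightarrow> dist w \<zeta> < \<delta> \<Longrightarrow> norm (D M w) < e"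
    using cont \<open>e > 0\<close> zero[of M] unfolding continuous_within_eps_delta by (auto simp: dist_norm)
  define K where "K = S \<inter> ball \<zeta> \<delta>"
  have "\<forall>w\<in>K. norm (D n w) \<le> e * norm (w - \<zeta>) ^ (M - n)" if "n \<le> M" for n
    using that
  proof (induction n rule: inc_induct)
    case base
    show ?case using \<delta> by (auto simp: K_def dist_commute less_imp_le)
  next
    case (step n)
    show ?case
    proof
      fix w assume "w \<in> K"
      define r where "r = norm (w - \<zeta>)"
      define K' where "K' = K \<inter> cball \<zeta> r"
      have "convex K'"
        unfolding K'_def K_def using \<open>convex S\<close> by (intro convex_Int convex_cball convex_ball)
      moreover have "(D n has_field_derivative D (Suc n) u) (at u within K')" if "u \<in> K'" for u
      proof -
        have "u \<in> S" "K' \<subseteq> S" using that by (auto simp: K'_def K_def)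
        then show ?thesis using der[OF step(2)] has_field_derivative_subset by blast
      qed
      moreover have "norm (D (Suc n) u) \<le> e * r ^ (M - Suc n)" if "u \<in> K'" for u
      proof -
        have "norm (D (Suc n) u) \<le> e * norm (u - \<zeta>) ^ (M - Suc n)"
          using step.IH that by (auto simp: K'_def)
        also have "\<dots> \<le> e * r ^ (M - Suc n)"
          using that \<open>e > 0\<close>
          by (intro mult_left_mono power_mono) (auto simp: K'_def dist_norm norm_minus_commute)
        finally show ?thesis .
      qed
      moreover have "w \<in> K'" "\<zeta> \<in> K'"
        using \<open>w \<in> K\<close> \<open>\<zeta> \<in> S\<close> \<open>\<delta> > 0\<close> by (auto simp: K'_def K_def r_def dist_norm norm_minus_commute)
      ultimately have "norm (D n w - D n \<zeta>) \<le> e * r ^ (M - Suc n) * r"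
        unfolding r_def by (rule field_differentiable_bound)
      then show "norm (D n w) \<le> e * norm (w - \<zeta>) ^ (M - n)"
        using zero[of n] step(2) by (simp add: r_def Suc_diff_Suc[symmetric] ac_simps)
    qed
  qed
  then have "\<forall>w\<in>K. norm (D 0 w) \<le> e * norm (w - \<zeta>) ^ M"
    by fastforce
  then show ?thesis
    unfolding eventually_at using \<open>\<delta> > 0\<close> by (auto simp: K_def dist_commute intro!: exI[of _ \<delta>])
qed

lemma at_within_le_at_within_locally:
  assumes "open U" "x \<in> U" "T \<inter> U \<subseteq> S"
  shows "at x within T \<le> at x within S"
proof -
  have "at x within T = at x within (T \<inter> U)"
    using assms(1,2) by (intro at_within_nhd[of x U]) auto
  also have "\<dots> \<le> at x within S"
    using assms(3) by (rule at_le)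
  finally show ?thesis .
qed

lemma CM_ext_diff:
  assumes "CM_ext M N f F" "CM_ext M N g G"
  shows "CM_ext M N (\<lambda>z. f z - g z) (\<lambda>n z. F n z - G n z)"
  using assms unfolding CM_ext_def by (auto intro!: continuous_on_diff DERIV_diff)

lemma CM_ext_eventually_eq:
  assumes "CM_ext M N f F" "open N" "\<zeta> \<in> N"
  shows "\<forall>\<^sub>F z in at \<zeta> within ball 0 1. F 0 z = f z"
proof -
  have "\<forall>\<^sub>F z in at \<zeta> within ball 0 1. z \<in> ball 0 1 \<inter> N"
    using assms(2,3) by (auto simp: eventually_at_filter eventually_nhds)
  then show ?thesis
    using assms(1) unfolding CM_ext_def by (auto elim: eventually_mono)
qed

lemma CM_ext_vanishing_imp_eventually_norm_le_power:
  assumes "CM_ext M N f F" "open N" "\<zeta> \<in> N" "cmod \<zeta> = 1"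
    and zero: "\<And>n. n \<le> M \<Longrightarrow> F n \<zeta> = 0" and "e > 0"
  shows "\<forall>\<^sub>F z in at \<zeta> within ball 0 1. cmod (f z) \<le> e * cmod (z - \<zeta>) ^ M"
proof -
  obtain r where "r > 0" and r: "ball \<zeta> r \<subseteq> N"
    using \<open>open N\<close> \<open>\<zeta> \<in> N\<close> open_contains_ball by blast
  define S where "S = cball (0::complex) 1 \<inter> ball \<zeta> r"
  have S_sub: "S \<subseteq> cball 0 1 \<inter> N"
    using r by (auto simp: S_def)
  have "\<forall>\<^sub>F z in at \<zeta> within S. cmod (F 0 z) \<le> e * cmod (z - \<zeta>) ^ M"
  proof (rule vanishing_derivatives_imp_eventually_norm_le_power[where D = F])
    show "convex S" "\<zeta> \<in> S"
      using \<open>r > 0\<close> \<open>cmod \<zeta> = 1\<close> by (auto simp: S_def intro!: convex_Int)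
    show "(F n has_field_derivative F (Suc n) z) (at z within S)" if "n < M" "z \<in> S" for n z
      using assms(1) that S_sub unfolding CM_ext_def by (blast intro: has_field_derivative_subset)
    have "continuous_on S (F M)"
      using assms(1) S_sub unfolding CM_ext_def by (blast intro: continuous_on_subset)
    then show "continuous (at \<zeta> within S) (F M)"
      using \<open>\<zeta> \<in> S\<close> continuous_on_eq_continuous_within by blast
  qed (use zero \<open>e > 0\<close> in auto)
  moreover have "at \<zeta> within ball 0 1 \<le> at \<zeta> within S"
    using \<open>r > 0\<close> by (intro at_within_le_at_within_locally[of "ball \<zeta> r"]) (auto simp: S_def)
  ultimately have "\<forall>\<^sub>F z in at \<zeta> within ball 0 1. cmod (F 0 z) \<le> e * cmod (z - \<zeta>) ^ M"
    using filter_leD by blast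
  moreover note CM_ext_eventually_eq[OF assms(1-3)]
  ultimately show ?thesis
    by eventually_elim simp
qed

lemma has_field_derivative_imp_eventually_norm_diff_ge:
  fixes F :: "'a::real_normed_field \<Rightarrow> 'a"
  assumes "(F has_field_derivative F') (at \<zeta> within S)" "F' \<noteq> 0"
  shows "\<forall>\<^sub>F y in at \<zeta> within S. norm F' / 2 * norm (y - \<zeta>) \<le> norm (F y - F \<zeta>)"
proof -
  have "((\<lambda>y. (F y - F \<zeta>) / (y - \<zeta>)) \<longlongrightarrow> F') (at \<zeta> within S)"
    using assms(1) by (simp add: has_field_derivative_iff)
  then have "\<forall>\<^sub>F y in at \<zeta> within S. dist ((F y - F \<zeta>) / (y - \<zeta>)) F' < norm F' / 2"
    using assms(2) by (intro tendstoD) auto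
  moreover have "\<forall>\<^sub>F y in at \<zeta> within S. y \<noteq> \<zeta>"
    by (simp add: eventually_at_filter)
  ultimately show ?thesis
  proof eventually_elim
    case (elim y)
    then have "norm F' / 2 \<le> norm ((F y - F \<zeta>) / (y - \<zeta>))"
      using norm_triangle_ineq2[of F' "(F y - F \<zeta>) / (y - \<zeta>)"] by (simp add: dist_norm norm_minus_commute)
    then show ?case
      using elim(2) by (simp add: norm_divide field_simps)
  qed
qed

lemma norm_radius_point:
  assumes "cmod \<zeta> = 1" "0 \<le> t" "t \<le> 1"
  shows "cmod (complex_of_real (1 - t) * \<zeta>) = 1 - t"
    and "cmod (complex_of_real (1 - t) * \<zeta> - \<zeta>) = t"
proof -
  have "complex_of_real (1 - t) * \<zeta> - \<zeta> = - complex_of_real t * \<zeta>"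
    by (simp add: algebra_simps)
  then show "cmod (complex_of_real (1 - t) * \<zeta>) = 1 - t" "cmod (complex_of_real (1 - t) * \<zeta> - \<zeta>) = t"
    using assms by (auto simp: norm_mult simp del: of_real_diff)
qed

lemma filterlim_radius_at_boundary:
  assumes "cmod \<zeta> = 1" "open N" "\<zeta> \<in> N"
  shows "filterlim (\<lambda>t. complex_of_real (1 - t) * \<zeta>) (at \<zeta> within ball 0 1 \<inter> N) (at_right 0)"
proof -
  let ?y = "\<lambda>t. complex_of_real (1 - t) * \<zeta>"
  have "(?y \<longlongrightarrow> complex_of_real (1 - 0) * \<zeta>) (at_right 0)"
    by (intro tendsto_intros)
  then have lim: "(?y \<longlongrightarrow> \<zeta>) (at_right 0)"
    by simp
  have "\<forall>\<^sub>F t in at_right 0. ?y t \<in> N"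
    using topological_tendstoD[OF lim \<open>open N\<close> \<open>\<zeta> \<in> N\<close>] .
  moreover have "\<forall>\<^sub>F t in at_right (0::real). 0 < t \<and> t < 1"
    by (simp add: eventually_at_right_field) (auto intro!: exI[of _ 1])
  ultimately have "\<forall>\<^sub>F t in at_right 0. ?y t \<in> ball 0 1 \<inter> N \<and> ?y t \<noteq> \<zeta>"
  proof eventually_elim
    case (elim t)
    then show ?case
      using norm_radius_point[OF \<open>cmod \<zeta> = 1\<close>, of t] by auto
  qed
  with lim show ?thesis
    unfolding filterlim_at by simp
qed

lemma boundary_derivative_nonzero:
  assumes hol: "f holomorphic_on ball 0 1" and img: "f ` ball 0 1 \<subseteq> ball 0 1"
    and "open N" "\<zeta> \<in> N" "cmod \<zeta> = 1"
    and agree: "\<And>z. z \<in> ball 0 1 \<inter> N \<Longrightarrow> F z = f z"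
    and der: "(F has_field_derivative F') (at \<zeta> within cball 0 1 \<inter> N)"
    and F_\<zeta>: "cmod (F \<zeta>) \<ge> 1"
  shows "F' \<noteq> 0"
proof
  assume "F' = 0"
  \<comment> \<open>Along the radius the Schwarz--Pick bound gives \<open>|F y - F \<zeta>| \<ge> C |y - \<zeta>|\<close>.\<close>
  obtain C where "C > 0" and C: "\<And>z. z \<in> ball 0 1 \<Longrightarrow> C * (1 - cmod z) \<le> 1 - cmod (f z)"
    using self_map_ball_boundary_distance_ge[OF hol img] by blast
  define y where "y = (\<lambda>t. complex_of_real (1 - t) * \<zeta>)"
  have radius: "filterlim y (at \<zeta> within ball 0 1 \<inter> N) (at_right 0)"
    unfolding y_def by (rule filterlim_radius_at_boundary[OF assms(5,3,4)])
  have "((\<lambda>y. (F y - F \<zeta>) / (y - \<zeta>)) \<longlongrightarrow> 0) (at \<zeta> within cball 0 1 \<inter> N)"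
    using der \<open>F' = 0\<close> by (simp add: has_field_derivative_iff)
  then have "((\<lambda>y. (F y - F \<zeta>) / (y - \<zeta>)) \<longlongrightarrow> 0) (at \<zeta> within ball 0 1 \<inter> N)"
    by (rule tendsto_within_subset) auto
  then have "((\<lambda>t. (F (y t) - F \<zeta>) / (y t - \<zeta>)) \<longlongrightarrow> 0) (at_right 0)"
    using radius by (rule filterlim_compose)
  then have "\<forall>\<^sub>F t in at_right 0. norm ((F (y t) - F \<zeta>) / (y t - \<zeta>)) < C"
    using \<open>C > 0\<close> by (auto dest: tendstoD simp: dist_norm)
  moreover have "\<forall>\<^sub>F t in at_right 0. y t \<in> ball 0 1 \<inter> N"
    using radius unfolding filterlim_at by (auto elim: eventually_mono)
  moreover have "\<forall>\<^sub>F t in at_right (0::real). 0 < t \<and> t < 1"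
    by (simp add: eventually_at_right_field) (auto intro!: exI[of _ 1])
  ultimately have "\<forall>\<^sub>F t in at_right (0::real). False"
  proof eventually_elim
    case (elim t)
    have "cmod (y t - \<zeta>) = t" "1 - cmod (y t) = t"
      using norm_radius_point[OF \<open>cmod \<zeta> = 1\<close>, of t] elim(3) by (simp_all add: y_def)
    have "C * t \<le> 1 - cmod (f (y t))"
      using C[of "y t"] elim(2) \<open>1 - cmod (y t) = t\<close> by simp
    also have "\<dots> \<le> cmod (F (y t) - F \<zeta>)"
      using agree[OF elim(2)] F_\<zeta> norm_triangle_ineq2[of "F \<zeta>" "F (y t)"] by (simp add: norm_minus_commute)
    finally show False
      using elim(1,3) \<open>cmod (y t - \<zeta>) = t\<close> by (simp add: norm_divide field_simps)
  qed
  then show False by simp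
qed

lemma powr_le_imp_power_le:
  fixes x y c :: real
  assumes "x > 0" "c > 0" "m > 0" and le: "c * x powr (real M / real m) \<le> y"
  shows "c ^ m * x ^ M \<le> y ^ m"
proof -
  have "(c * x powr (real M / real m)) ^ m \<le> y ^ m"
    using le assms(1,2) by (intro power_mono) auto
  moreover have "(x powr (real M / real m)) ^ m = x powr (real m * (real M / real m))"
    using assms(1) by (simp add: powr_power)
  ultimately show ?thesis
    using assms(1,3) by (simp add: power_mult_distrib powr_realpow)
qed

lemma boundary_distance_bounded_below_if_interior_value:
  assumes "CM_ext M N \<phi> \<Phi>" "open N" "\<zeta> \<in> N" "cmod \<zeta> = 1" "cmod (\<Phi> 0 \<zeta>) < 1"
  shows "\<exists>q>0. \<forall>\<^sub>F z in at \<zeta> within ball 0 1. q \<le> 1 - cmod (\<phi> z)"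
proof -
  let ?S = "cball 0 1 \<inter> N"
  define q where "q = (1 - cmod (\<Phi> 0 \<zeta>)) / 2"
  have "q > 0"
    using assms(5) by (simp add: q_def)
  have "continuous_on ?S (\<Phi> 0)"
    using assms(1) by (simp add: CM_ext_def)
  then have "(\<Phi> 0 \<longlongrightarrow> \<Phi> 0 \<zeta>) (at \<zeta> within ?S)"
    using assms(3,4) by (simp add: continuous_on_eq_continuous_within continuous_within)
  moreover have "at \<zeta> within ball 0 1 \<le> at \<zeta> within ?S"
    using assms(2,3) by (intro at_within_le_at_within_locally) auto
  ultimately have "\<forall>\<^sub>F z in at \<zeta> within ball 0 1. dist (\<Phi> 0 z) (\<Phi> 0 \<zeta>) < q"
    using \<open>q > 0\<close> filter_leD tendstoD by blast
  with CM_ext_eventually_eq[OF assms(1-3)]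
  have "\<forall>\<^sub>F z in at \<zeta> within ball 0 1. q \<le> 1 - cmod (\<phi> z)"
  proof eventually_elim
    case (elim z)
    then show ?case
      using norm_triangle_ineq2[of "\<phi> z" "\<Phi> 0 \<zeta>"] by (auto simp: q_def dist_norm)
  qed
  with \<open>q > 0\<close> show ?thesis
    by blast
qed

lemma norm_diff_ge_if_boundary_value:
  assumes hol: "\<phi> holomorphic_on ball 0 1" and img: "\<phi> ` ball 0 1 \<subseteq> ball 0 1"
    and ext: "CM_ext M N \<phi> \<Phi>" and "open N" "\<zeta> \<in> N" "cmod \<zeta> = 1" "M \<ge> 1" "cmod (\<Phi> 0 \<zeta>) \<ge> 1"
  shows "\<exists>k>0. \<forall>\<^sub>F z in at \<zeta> within ball 0 1. k * cmod (z - \<zeta>) \<le> cmod (\<phi> z - \<Phi> 0 \<zeta>)"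
proof -
  let ?S = "cball 0 1 \<inter> N"
  have der: "(\<Phi> 0 has_field_derivative \<Phi> 1 \<zeta>) (at \<zeta> within ?S)"
    using ext assms(5-7) by (simp add: CM_ext_def)
  have "\<Phi> 1 \<zeta> \<noteq> 0"
    using ext assms(8)
    by (intro boundary_derivative_nonzero[OF hol img assms(4-6) _ der]) (auto simp: CM_ext_def)
  have "at \<zeta> within ball 0 1 \<le> at \<zeta> within ?S"
    using assms(4,5) by (intro at_within_le_at_within_locally) auto
  then have "\<forall>\<^sub>F z in at \<zeta> within ball 0 1. cmod (\<Phi> 1 \<zeta>) / 2 * cmod (z - \<zeta>) \<le> cmod (\<Phi> 0 z - \<Phi> 0 \<zeta>)"
    using has_field_derivative_imp_eventually_norm_diff_ge[OF der \<open>\<Phi> 1 \<zeta> \<noteq> 0\<close>] filter_leD by blast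
  with CM_ext_eventually_eq[OF ext assms(4,5)]
  have "\<forall>\<^sub>F z in at \<zeta> within ball 0 1. cmod (\<Phi> 1 \<zeta>) / 2 * cmod (z - \<zeta>) \<le> cmod (\<phi> z - \<Phi> 0 \<zeta>)"
    by eventually_elim simp
  with \<open>\<Phi> 1 \<zeta> \<noteq> 0\<close> show ?thesis
    by (intro exI[of _ "cmod (\<Phi> 1 \<zeta>) / 2"]) auto
qed

lemma boundary_distance_dominates_power:
  fixes \<phi> :: "complex \<Rightarrow> complex"
  assumes hol: "\<phi> holomorphic_on ball 0 1" and img: "\<phi> ` ball 0 1 \<subseteq> ball 0 1"
    and "cmod \<zeta> = 1" "open N" "\<zeta> \<in> N" and ext: "CM_ext M N \<phi> \<Phi>" and "M \<ge> 1" "m \<ge> 1"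
    and "c' > 0" "open N'" "\<zeta> \<in> N'"
    and contact: "\<forall>z\<in>ball 0 1 \<inter> N'. c' * cmod (\<phi> z - \<Phi> 0 \<zeta>) powr (real M / real m) \<le> 1 - cmod (\<phi> z)"
  shows "\<exists>K>0. \<forall>\<^sub>F z in at \<zeta> within ball 0 1. cmod (z - \<zeta>) ^ M \<le> K * (1 - cmod (\<phi> z)) ^ m"
proof -
  let ?F = "at \<zeta> within ball 0 1"
  have near: "\<forall>\<^sub>F z in ?F. z \<in> ball 0 1 \<inter> N' \<and> z \<noteq> \<zeta> \<and> cmod (z - \<zeta>) < 1"
  proof -
    have "open (N' \<inter> ball \<zeta> 1)" "\<zeta> \<in> N' \<inter> ball \<zeta> 1"
      using \<open>open N'\<close> \<open>\<zeta> \<in> N'\<close> by auto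
    then show ?thesis
      unfolding eventually_at_filter eventually_nhds by (fastforce simp: dist_norm norm_minus_commute)
  qed
  consider "cmod (\<Phi> 0 \<zeta>) < 1" | "cmod (\<Phi> 0 \<zeta>) \<ge> 1" by linarith
  then show ?thesis
  proof cases
    case 1
    then obtain q where "q > 0" and q: "\<forall>\<^sub>F z in ?F. q \<le> 1 - cmod (\<phi> z)"
      using boundary_distance_bounded_below_if_interior_value[OF ext assms(4,5,3)] by blast
    from near q have "\<forall>\<^sub>F z in ?F. cmod (z - \<zeta>) ^ M \<le> 1 / q ^ m * (1 - cmod (\<phi> z)) ^ m"
    proof eventually_elim
      case (elim z)
      then have "1 \<le> 1 / q ^ m * (1 - cmod (\<phi> z)) ^ m"
        using \<open>q > 0\<close> power_mono[of q "1 - cmod (\<phi> z)" m] by (simp add: field_simps)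
      moreover have "cmod (z - \<zeta>) ^ M \<le> 1"
        using elim by (simp add: power_le_one)
      ultimately show ?case by linarith
    qed
    then show ?thesis
      using \<open>q > 0\<close> by (intro exI[of _ "1 / q ^ m"]) simp
  next
    case 2
    then obtain k where "k > 0"
      and k: "\<forall>\<^sub>F z in ?F. k * cmod (z - \<zeta>) \<le> cmod (\<phi> z - \<Phi> 0 \<zeta>)"
      using norm_diff_ge_if_boundary_value[OF hol img ext assms(4,5,3) \<open>M \<ge> 1\<close>] by blast
    from near k have "\<forall>\<^sub>F z in ?F. cmod (z - \<zeta>) ^ M \<le> 1 / (c' ^ m * k ^ M) * (1 - cmod (\<phi> z)) ^ m"
    proof eventually_elim
      case (elim z)
      have kz: "0 < k * cmod (z - \<zeta>)"
        using \<open>k > 0\<close> elim by simp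
      have "c' * (k * cmod (z - \<zeta>)) powr (real M / real m) \<le> c' * cmod (\<phi> z - \<Phi> 0 \<zeta>) powr (real M / real m)"
        using elim kz \<open>c' > 0\<close> by (intro mult_left_mono powr_mono2) auto
      also have "\<dots> \<le> 1 - cmod (\<phi> z)"
        using contact elim by auto
      finally have "c' ^ m * (k * cmod (z - \<zeta>)) ^ M \<le> (1 - cmod (\<phi> z)) ^ m"
        using kz \<open>c' > 0\<close> \<open>m \<ge> 1\<close> by (intro powr_le_imp_power_le) auto
      then show ?case
        using \<open>c' > 0\<close> \<open>k > 0\<close> by (simp add: field_simps)
    qed
    then show ?thesis
      using \<open>c' > 0\<close> \<open>k > 0\<close> by (intro exI[of _ "1 / (c' ^ m * k ^ M)"]) simp
  qed
qed

theorem proposition4p1: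
  fixes \<eta> :: "complex \<Rightarrow> real" and \<tau> :: "real \<Rightarrow> real"
    and m M :: nat and c :: real
    and \<phi> \<psi> :: "complex \<Rightarrow> complex" and \<zeta> :: complex
  assumes W: "in_W \<eta> \<tau>"
    and m: "m \<ge> 1" and c: "c > 0"
    and tau_lower: "\<forall>r\<in>{0..<1}. \<tau> r \<ge> c * (1 - r) ^ m"
    and hphi: "\<phi> holomorphic_on ball 0 1" "\<phi> ` ball 0 1 \<subseteq> ball 0 1"
    and hpsi: "\<psi> holomorphic_on ball 0 1" "\<psi> ` ball 0 1 \<subseteq> ball 0 1"
    and zeta: "cmod \<zeta> = 1"
    and M: "M \<ge> 1"
    and ext: "\<exists>N \<Phi> \<Psi>. open N \<and> \<zeta> \<in> N \<and> CM_ext M N \<phi> \<Phi> \<and> CM_ext M N \<psi> \<Psi> \<and>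
               (\<forall>n\<le>M. \<Phi> n \<zeta> = \<Psi> n \<zeta>) \<and>
               (\<exists>c' N'. c' > 0 \<and> open N' \<and> \<zeta> \<in> N' \<and>
                  (\<forall>z\<in>ball 0 1 \<inter> N'.
                     1 - cmod (\<phi> z) \<ge> c' * cmod (\<phi> z - \<Phi> 0 \<zeta>) powr (real M / real m)))"
  shows "((\<lambda>z. rho_tau \<tau> (\<phi> z) (\<psi> z)) \<longlongrightarrow> 0) (at \<zeta> within ball 0 1)"
proof -
  obtain N \<Phi> \<Psi> c' N' where N: "open N" "\<zeta> \<in> N"
    and \<Phi>: "CM_ext M N \<phi> \<Phi>" and \<Psi>: "CM_ext M N \<psi> \<Psi>" and same: "\<forall>n\<le>M. \<Phi> n \<zeta> = \<Psi> n \<zeta>"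
    and contact: "c' > 0" "open N'" "\<zeta> \<in> N'"
      "\<forall>z\<in>ball 0 1 \<inter> N'. c' * cmod (\<phi> z - \<Phi> 0 \<zeta>) powr (real M / real m) \<le> 1 - cmod (\<phi> z)"
    using ext by blast
  obtain K where "K > 0"
    and K: "\<forall>\<^sub>F z in at \<zeta> within ball 0 1. cmod (z - \<zeta>) ^ M \<le> K * (1 - cmod (\<phi> z)) ^ m"
    using boundary_distance_dominates_power[OF hphi zeta N \<Phi> M m contact] by blast
  have close: "\<forall>\<^sub>F z in at \<zeta> within ball 0 1. cmod (\<phi> z - \<psi> z) \<le> e * (1 - cmod (\<phi> z)) ^ m"
    if "e > 0" for e
  proof -
    have "\<forall>\<^sub>F z in at \<zeta> within ball 0 1. cmod (\<phi> z - \<psi> z) \<le> e / K * cmod (z - \<zeta>) ^ M"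
      by (rule CM_ext_vanishing_imp_eventually_norm_le_power[OF CM_ext_diff[OF \<Phi> \<Psi>] N zeta])
        (use same \<open>e > 0\<close> \<open>K > 0\<close> in auto)
    with K show ?thesis
    proof eventually_elim
      case (elim z)
      then show ?case
        using \<open>e > 0\<close> \<open>K > 0\<close> mult_left_mono[OF elim(1), of "e / K"] by simp
    qed
  qed
  have inside: "\<forall>\<^sub>F z in at \<zeta> within ball 0 1. cmod (\<phi> z) < 1"
    using hphi(2) by (auto simp: eventually_at_filter image_subset_iff)
  show ?thesis
    by (rule tendsto_rho_tau_zeroI[OF c m tau_lower inside close])
qed

end
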